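(* Let $U\in C([0,1])\cap C^1((0,1])\cap C^2((0,1))$ satisfy $U''>0$ on $(0,1)$, $\lim_{h\downarrow0}U'(h)=-\infty$, and $r\mapsto rU''(r)$ non-decreasing on $(0,1)$. Let $\widetilde a,a>0$ with $\widetilde a<a\le1$. Suppose that for some integer $K\ge3$ there exists $\kappa>0$ such that $D_U(\widetilde a z,\widetilde a w)=\kappa D_U(az,aw)$ for all $z,w\in\mathcal{P}_K$. Then there exist $\mu_0,\mu_1\in\mathbb{R}$ and $\lambda>0$ such that $U(r)=\lambda r\log r+\mu_1r+\mu_0$ for all $r\in(0,a]$.
   Context: $\mathcal{P}_K=\{z\in\mathbb{R}^K: z_k\ge0,\sum_kz_k=1\}$. $d_U(r,r_0)=U(r)-U(r_0)-(r-r_0)U'(r_0)$ for $r\in[0,1]$, $r_0\in(0,1]$, extended by $d_U(r,0)=\lim_{r_0\downarrow0}d_U(r,r_0)\in[0,\infty]$. For $b\in(0,1]$ and $z,w\in\mathcal{P}_K$, $D_U(bz,bw)=\sum_k d_U(bz_k,bw_k)$. *)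

theory Defs
  imports "HOL-Analysis.Analysis"
begin

definition prob_simplex :: "nat \<Rightarrow> (nat \<Rightarrow> real) set" where
  "prob_simplex K = {z. (\<forall>k<K. 0 \<le> z k) \<and> (\<Sum>k<K. z k) = 1}"

text \<open>Bregman divergence d_U(r,r0), with values in the extended reals; U' is the given
  derivative of U. For r0 = 0 it is the limit as r0 tends to 0 from the right.\<close>
definition dU :: "(real \<Rightarrow> real) \<Rightarrow> (real \<Rightarrow> real) \<Rightarrow> real \<Rightarrow> real \<Rightarrow> ereal" where
  "dU U U' r r0 =
     (if 0 < r0 then ereal (U r - U r0 - (r - r0) * U' r0)
      else Lim (at_right 0) (\<lambda>s. ereal (U r - U s - (r - s) * U' s)))"

definition DU :: "(real \<Rightarrow> real) \<Rightarrow> (real \<Rightarrow> real) \<Rightarrow> nat \<Rightarrow> real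
                   \<Rightarrow> (nat \<Rightarrow> real) \<Rightarrow> (nat \<Rightarrow> real) \<Rightarrow> ereal" where
  "DU U U' K b z w = (\<Sum>k<K. dU U U' (b * z k) (b * w k))"

end

theory Submission
  imports Defs
begin

(*
  Testing the scaling identity on the vectors (x, s - x, c, ..., c) and (s/2, s/2, c, ..., c)
  of the simplex kills all but two Bregman terms, so P y = U (a_tilde y) - kappa U (a y) satisfies
  P x + P (s - x) = 2 P (s/2). Hence P' is invariant under x |-> s - x, thus constant, which gives
  U' (rho t) = q U' t + c with rho = a_tilde / a < 1 and q = kappa a / a_tilde. Differentiating,
  phi r = r U'' r satisfies phi (rho t) = q phi t. Monotonicity of phi rules out q > 1, and q < 1
  would make U' (rho^n t) converge, contradicting U' -> -infinity at 0. So phi is monotone and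
  invariant under r |-> rho r, hence a constant lam > 0, and integrating U'' = lam / r twice
  gives U.
*)

definition pad_uniform :: "nat \<Rightarrow> real \<Rightarrow> real \<Rightarrow> nat \<Rightarrow> real" where
  "pad_uniform K u v k = (if k = 0 then u else if k = 1 then v else (1 - u - v) / real (K - 2))"

lemma sum_lessThan_split_first_two:
  fixes f :: "nat \<Rightarrow> 'a::comm_monoid_add"
  assumes "2 \<le> K"
  shows "(\<Sum>k<K. f k) = f 0 + f 1 + (\<Sum>k\<in>{2..<K}. f k)"
proof -
  have "{..<K} = insert 0 (insert 1 {2..<K})" using assms by auto
  then show ?thesis by (simp add: add.assoc)
qed

lemma pad_uniform_in_prob_simplex:
  assumes "3 \<le> K" "0 \<le> u" "0 \<le> v" "u + v \<le> 1"
  shows "pad_uniform K u v \<in> prob_simplex K"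
  using assms sum_lessThan_split_first_two[of K "pad_uniform K u v"]
  by (auto simp: prob_simplex_def pad_uniform_def)

lemma dU_self: "0 < r \<Longrightarrow> dU U U' r r = 0"
  by (simp add: dU_def zero_ereal_def)

lemma DU_pad_uniform:
  assumes "3 \<le> K" "0 < b" "u + v = u' + v'" "u' + v' < 1"
  shows "DU U U' K b (pad_uniform K u v) (pad_uniform K u' v')
           = dU U U' (b * u) (b * u') + dU U U' (b * v) (b * v')"
proof -
  have "pad_uniform K u v k = pad_uniform K u' v' k" "0 < b * pad_uniform K u' v' k"
    if "2 \<le> k" for k
    using that assms by (simp_all add: pad_uniform_def diff_diff_eq)
  then have "(\<Sum>k\<in>{2..<K}. dU U U' (b * pad_uniform K u v k) (b * pad_uniform K u' v' k)) = 0"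
    by (simp add: dU_self)
  then show ?thesis
    using assms by (simp add: DU_def sum_lessThan_split_first_two pad_uniform_def)
qed

lemma scaling_midpoint_gap:
  assumes K: "3 \<le> K" and b: "0 < a_tilde" "0 < a"
    and scaling: "\<And>z w. z \<in> prob_simplex K \<Longrightarrow> w \<in> prob_simplex K \<Longrightarrow>
                    DU U U' K a_tilde z w = ereal \<kappa> * DU U U' K a z w"
    and xs: "0 < x" "x < s" "s < 1"
  shows "U (a_tilde * x) + U (a_tilde * (s - x)) - 2 * U (a_tilde * (s / 2))
           = \<kappa> * (U (a * x) + U (a * (s - x)) - 2 * U (a * (s / 2)))"
proof -
  have DU_gap: "DU U U' K b (pad_uniform K x (s - x)) (pad_uniform K (s/2) (s/2))
                  = ereal (U (b * x) + U (b * (s - x)) - 2 * U (b * (s / 2)))" if "0 < b" for b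
    using DU_pad_uniform[OF K that, of x "s - x" "s/2" "s/2"] that xs
    by (simp add: dU_def algebra_simps)
  have "pad_uniform K x (s - x) \<in> prob_simplex K" "pad_uniform K (s/2) (s/2) \<in> prob_simplex K"
    using K xs by (auto intro: pad_uniform_in_prob_simplex)
  from scaling[OF this] show ?thesis by (simp add: DU_gap b)
qed

lemma reflection_invariant_imp_const:
  fixes F :: "real \<Rightarrow> 'a"
  assumes "\<And>x s. 0 < x \<Longrightarrow> x < s \<Longrightarrow> s < 1 \<Longrightarrow> F x = F (s - x)" "0 < u" "u < 1"
  shows "F u = F (1/2)"
proof -
  define x :: real where "x = min (1 - u) (1/2) / 2"
  have x: "0 < x" "x < 1 - u" "x < 1/2" using assms(2,3) by (auto simp: x_def)
  have "F x = F ((x + u) - x)" by (rule assms(1)) (use x assms(2) in auto)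
  moreover have "F x = F ((x + 1/2) - x)" by (rule assms(1)) (use x in auto)
  ultimately show ?thesis by simp
qed

lemma reflection_invariant_derivative:
  fixes P :: "real \<Rightarrow> real"
  assumes sum_eq: "\<And>x. 0 < x \<Longrightarrow> x < s \<Longrightarrow> P x + P (s - x) = c"
    and der: "\<And>y. 0 < y \<Longrightarrow> y < s \<Longrightarrow> (P has_real_derivative F y) (at y)"
    and x: "0 < x" "x < s"
  shows "F x = F (s - x)"
proof -
  have sum_der: "((\<lambda>y. P y + P (s - y)) has_real_derivative F x + F (s - x) * (- 1)) (at x)"
    using x by (intro DERIV_add der DERIV_chain2[OF der]) (auto intro!: derivative_eq_intros)
  have sum_const: "\<forall>y. \<bar>x - y\<bar> < min x (s - x) \<longrightarrow> P x + P (s - x) = P y + P (s - y)"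
    using x by (auto simp: sum_eq abs_less_iff)
  have "F x + F (s - x) * (- 1) = 0"
    by (rule DERIV_local_const[OF sum_der _ sum_const]) (use x in auto)
  then show ?thesis by simp
qed

lemma scaling_imp_derivative_self_similar:
  fixes U U' :: "real \<Rightarrow> real"
  assumes derU: "\<And>r. 0 < r \<Longrightarrow> r < 1 \<Longrightarrow> (U has_real_derivative U' r) (at r)"
    and K: "3 \<le> K" and b: "0 < a_tilde" "a_tilde \<le> 1" "0 < a" "a \<le> 1"
    and scaling: "\<And>z w. z \<in> prob_simplex K \<Longrightarrow> w \<in> prob_simplex K \<Longrightarrow>
                    DU U U' K a_tilde z w = ereal \<kappa> * DU U U' K a z w"
  shows "\<exists>c. \<forall>t\<in>{0<..<a}. U' (a_tilde / a * t) = \<kappa> * a / a_tilde * U' t + c"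
proof -
  define P where "P y = U (a_tilde * y) - \<kappa> * U (a * y)" for y
  define F where "F y = a_tilde * U' (a_tilde * y) - \<kappa> * a * U' (a * y)" for y
  have in_unit: "0 < c * y \<and> c * y < 1" if "0 < c" "c \<le> 1" "0 < y" "y < 1" for c y :: real
  proof -
    have "c * y \<le> y" using that mult_right_mono[of c 1 y] by simp
    then have "c * y < 1" using that by linarith
    with that show ?thesis by simp
  qed
  have P_der: "(P has_real_derivative F y) (at y)" if "0 < y" "y < 1" for y
    unfolding P_def F_def using in_unit[OF b(1,2) that] in_unit[OF b(3,4) that]
    by (auto intro!: derivative_eq_intros DERIV_chain2[OF derU] simp: algebra_simps)
  have F_refl: "F x = F (s - x)" if "0 < x" "x < s" "s < 1" for x s
  proof (rule reflection_invariant_derivative[where P = P and c = "2 * P (s/2)"])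
    show "P y + P (s - y) = 2 * P (s/2)" if "0 < y" "y < s" for y
      using scaling_midpoint_gap[OF K b(1,3) scaling that \<open>s < 1\<close>] by (simp add: P_def algebra_simps)
  qed (use that P_der in auto)
  have "U' (a_tilde / a * t) = \<kappa> * a / a_tilde * U' t + F (1/2) / a_tilde" if "0 < t" "t < a" for t
  proof -
    have "F (t / a) = F (1/2)"
      using that b by (intro reflection_invariant_imp_const[OF F_refl]) auto
    moreover have "F (t / a) = a_tilde * U' (a_tilde / a * t) - \<kappa> * a * U' t"
      using b by (simp add: F_def)
    ultimately have "a_tilde * U' (a_tilde / a * t) = \<kappa> * a * U' t + F (1/2)" by linarith
    then have "U' (a_tilde / a * t) = (\<kappa> * a * U' t + F (1/2)) / a_tilde"
      using b by (intro eq_divide_imp) (simp_all add: mult.commute)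
    then show ?thesis by (simp add: add_divide_distrib)
  qed
  then show ?thesis by (intro exI[of _ "F (1/2) / a_tilde"]) auto
qed

lemma affine_recurrence_LIMSEQ:
  fixes V :: "nat \<Rightarrow> real"
  assumes rec: "\<And>n. V (Suc n) = q * V n + c" and q: "\<bar>q\<bar> < 1"
  shows "V \<longlonglongrightarrow> c / (1 - q)"
proof -
  define L where "L = c / (1 - q)"
  have fixpoint: "q * L + c = L" using q by (simp add: L_def field_simps)
  have closed_form: "V n = L + q ^ n * (V 0 - L)" for n
  proof (induction n)
    case (Suc n)
    have "V (Suc n) = (q * L + c) + q ^ Suc n * (V 0 - L)"
      by (simp only: rec Suc.IH) (simp add: algebra_simps)
    then show ?case by (simp only: fixpoint)
  qed simp
  have "(\<lambda>n. L + q ^ n * (V 0 - L)) \<longlonglongrightarrow> L + 0 * (V 0 - L)"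
    by (intro tendsto_add tendsto_mult tendsto_const LIMSEQ_abs_realpow_zero2 q)
  then show ?thesis unfolding L_def[symmetric] closed_form[symmetric] by simp
qed

lemma affine_self_similar_not_tendsto_at_bot:
  fixes f :: "real \<Rightarrow> real"
  assumes self_sim: "\<And>t. 0 < t \<Longrightarrow> t < a \<Longrightarrow> f (\<rho> * t) = q * f t + c"
    and "0 < a" "0 < \<rho>" "\<rho> < 1" "\<bar>q\<bar> < 1"
  shows "\<not> filterlim f at_bot (at_right 0)"
proof
  assume lim: "filterlim f at_bot (at_right 0)"
  define t where "t n = \<rho> ^ n * (a / 2)" for n
  have t_in: "0 < t n \<and> t n < a" for n
  proof -
    have "\<rho> ^ n \<le> 1" using assms(3,4) by (simp add: power_le_one)
    then show ?thesis using assms(2,3) mult_left_le_one_le[of "a/2" "\<rho> ^ n"] by (simp add: t_def)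
  qed
  have "t \<longlonglongrightarrow> 0 * (a / 2)"
    unfolding t_def using assms(3,4) by (intro tendsto_intros LIMSEQ_power_zero) auto
  then have "filterlim t (at_right 0) sequentially"
    using t_in by (intro tendsto_imp_filterlim_at_right) auto
  then have diverges: "filterlim (\<lambda>n. f (t n)) at_infinity sequentially"
    by (rule filterlim_mono[OF filterlim_compose[OF lim] at_bot_le_at_infinity order_refl])
  have "f (t (Suc n)) = q * f (t n) + c" for n
  proof -
    have "t (Suc n) = \<rho> * t n" by (simp add: t_def)
    then show ?thesis using self_sim t_in by simp
  qed
  then have converges: "(\<lambda>n. f (t n)) \<longlonglongrightarrow> c / (1 - q)"
    using assms(5) by (rule affine_recurrence_LIMSEQ)
  show False
    by (rule not_tendsto_and_filterlim_at_infinity[OF trivial_limit_sequentially converges diverges])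
qed

lemma mono_on_scale_invariant_imp_const:
  fixes \<phi> :: "real \<Rightarrow> real"
  assumes mono: "mono_on {0<..<a} \<phi>" and \<rho>: "0 < \<rho>" "\<rho> < 1"
    and inv: "\<And>t. 0 < t \<Longrightarrow> t < a \<Longrightarrow> \<phi> (\<rho> * t) = \<phi> t"
    and s: "0 < s" "s < a" and t: "0 < t" "t < a"
  shows "\<phi> s = \<phi> t"
proof -
  have iter: "0 < \<rho> ^ n * t \<and> \<rho> ^ n * t < a \<and> \<phi> (\<rho> ^ n * t) = \<phi> t"
    if "0 < t" "t < a" for n t
    using that
  proof (induction n arbitrary: t)
    case (Suc n)
    have "\<rho> * t < 1 * t" using Suc.prems \<rho> by (intro mult_strict_right_mono)
    then have "0 < \<rho> * t" "\<rho> * t < a" using Suc.prems \<rho> by (simp, linarith)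
    then show ?case
      using Suc.IH[of "\<rho> * t"] inv[OF Suc.prems] by (simp add: mult.assoc mult.left_commute)
  qed simp
  have le: "\<phi> t \<le> \<phi> s" if st: "0 < s" "s < a" "0 < t" "t < a" for s t
  proof -
    obtain n where "\<rho> ^ n < s / t" using real_arch_pow_inv[of "s / t" \<rho>] st \<rho> by auto
    then have "\<rho> ^ n * t < s" using st by (simp add: field_simps)
    then have "\<phi> (\<rho> ^ n * t) \<le> \<phi> s"
      using iter[of t n] st by (intro mono_onD[OF mono]) auto
    then show ?thesis using iter[of t n] st by simp
  qed
  show ?thesis using le[OF s t] le[OF t s] by simp
qed

lemma second_derivative_inverse_if_self_similar:
  fixes U' U'' :: "real \<Rightarrow> real"
  assumes a: "0 < a" and \<rho>: "0 < \<rho>" "\<rho> < 1" and q: "0 < q"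
    and self_sim: "\<And>t. 0 < t \<Longrightarrow> t < a \<Longrightarrow> U' (\<rho> * t) = q * U' t + c"
    and der: "\<And>r. 0 < r \<Longrightarrow> r < a \<Longrightarrow> (U' has_real_derivative U'' r) (at r)"
    and pos: "\<And>r. 0 < r \<Longrightarrow> r < a \<Longrightarrow> 0 < U'' r"
    and mono: "mono_on {0<..<a} (\<lambda>r. r * U'' r)"
    and lim: "filterlim U' at_bot (at_right 0)"
  shows "\<exists>lam>0. \<forall>r\<in>{0<..<a}. U'' r = lam / r"
proof -
  define \<phi> where "\<phi> = (\<lambda>r. r * U'' r)"
  have \<rho>t: "0 < \<rho> * t \<and> \<rho> * t < a" if "0 < t" "t < a" for t
  proof -
    have "\<rho> * t < 1 * t" using that \<rho> by (intro mult_strict_right_mono)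
    then show ?thesis using that \<rho> by (simp, linarith)
  qed
  have \<phi>_scale: "\<phi> (\<rho> * t) = q * \<phi> t" if t: "0 < t" "t < a" for t
  proof -
    have "((\<lambda>t. U' (\<rho> * t)) has_real_derivative U'' (\<rho> * t) * \<rho>) (at t)"
      using \<rho>t[OF t] by (intro DERIV_chain2[OF der]) (auto intro!: derivative_eq_intros)
    moreover have "((\<lambda>t. U' (\<rho> * t)) has_real_derivative q * U'' t) (at t)"
    proof (rule has_field_derivative_transform_within_open[where S = "{0<..<a}"])
      show "((\<lambda>t. q * U' t + c) has_real_derivative q * U'' t) (at t)"
        using t by (auto intro!: derivative_eq_intros der)
    qed (use t in \<open>auto simp: self_sim\<close>)
    ultimately have "U'' (\<rho> * t) * \<rho> = q * U'' t" by (rule DERIV_unique)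
    then show ?thesis by (simp add: \<phi>_def) (metis mult.commute)
  qed
  have "q = 1"
  proof (rule linorder_cases[of q 1])
    assume "q < 1"
    then have "\<not> filterlim U' at_bot (at_right 0)"
      using q by (intro affine_self_similar_not_tendsto_at_bot[where f = U', OF self_sim a \<rho>]) auto
    with lim show ?thesis by contradiction
  next
    assume "1 < q"
    have "\<phi> (\<rho> * (a/2)) \<le> \<phi> (a/2)"
      using \<rho>t[of "a/2"] a \<rho> unfolding \<phi>_def by (intro mono_onD[OF mono]) auto
    moreover have "0 < \<phi> (a/2)" using pos[of "a/2"] a by (simp add: \<phi>_def)
    ultimately show ?thesis using \<phi>_scale[of "a/2"] a \<open>1 < q\<close> by simp
  qed simp
  then have \<phi>_inv: "\<phi> (\<rho> * t) = \<phi> t" if "0 < t" "t < a" for t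
    using \<phi>_scale[OF that] by simp
  have \<phi>_const: "\<phi> r = \<phi> (a/2)" if "0 < r" "r < a" for r
    by (rule mono_on_scale_invariant_imp_const[where s = r and t = "a/2",
          OF mono[folded \<phi>_def] \<rho> \<phi>_inv]) (use a that in auto)
  show ?thesis
  proof (intro exI conjI ballI)
    show "0 < \<phi> (a/2)" using pos[of "a/2"] a by (simp add: \<phi>_def)
    show "U'' r = \<phi> (a/2) / r" if "r \<in> {0<..<a}" for r
      using \<phi>_const[of r] that by (auto simp: \<phi>_def field_simps)
  qed
qed

lemma xlnx_affine_if_second_derivative_inverse:
  fixes U U' :: "real \<Rightarrow> real"
  assumes a: "0 < a" and contU: "continuous_on {0<..a} U"
    and derU: "\<And>r. 0 < r \<Longrightarrow> r < a \<Longrightarrow> (U has_real_derivative U' r) (at r)"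
    and derU': "\<And>r. 0 < r \<Longrightarrow> r < a \<Longrightarrow> (U' has_real_derivative lam / r) (at r)"
  shows "\<exists>\<mu>0 \<mu>1. \<forall>r\<in>{0<..a}. U r = lam * r * ln r + \<mu>1 * r + \<mu>0"
proof -
  define m where "m = U' (a/2) - lam * ln (a/2)"
  have U'_eq: "U' r = lam * ln r + m" if "0 < r" "r < a" for r
  proof -
    have "U' r - lam * ln r = U' (a/2) - lam * ln (a/2)"
    proof (rule DERIV_isconst3[where f = "\<lambda>r. U' r - lam * ln r"])
      fix x :: real assume x: "x \<in> {0<..<a}"
      then have "((\<lambda>r. U' r - lam * ln r) has_real_derivative lam / x - lam * inverse x) (at x)"
        by (auto intro!: derivative_eq_intros derU' simp: divide_inverse)
      then show "((\<lambda>r. U' r - lam * ln r) has_real_derivative 0) (at x)"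
        by (simp add: field_simps)
    qed (use a that in auto)
    then show ?thesis by (simp add: m_def)
  qed
  define G where "G r = U r - lam * r * ln r - (m - lam) * r" for r
  define \<mu>0 where "\<mu>0 = G (a/2)"
  have G_const: "G r = \<mu>0" if "r \<in> {0<..a}" for r
  proof (rule has_derivative_zero_unique_strong_convex[where f = G and S = "{0<..a}" and K = "{a}"])
    show "continuous_on {0<..a} G"
      unfolding G_def by (intro continuous_intros contU) auto
    fix x assume x: "x \<in> {0<..a} - {a}"
    then have "(G has_real_derivative U' x - (lam * ln x + lam) - (m - lam)) (at x)"
      unfolding G_def by (auto intro!: derivative_eq_intros derU)
    then have "(G has_real_derivative 0) (at x within {0<..a})"
      using x U'_eq[of x] by (auto intro: has_field_derivative_at_within)
    then show "(G has_derivative (\<lambda>h. 0)) (at x within {0<..a})"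
      by (simp add: has_field_derivative_def lambda_zero)
  qed (use a that in \<open>auto simp: \<mu>0_def\<close>)
  have "\<forall>r\<in>{0<..a}. U r = lam * r * ln r + (m - lam) * r + \<mu>0"
    using G_const unfolding G_def by (auto simp: algebra_simps)
  then show ?thesis by blast
qed

theorem proposition4p4:
  fixes U U' U'' :: "real \<Rightarrow> real" and a a_tilde \<kappa> :: real and K :: nat
  assumes contU: "continuous_on {0..1} U"
    and derU: "\<And>r. r \<in> {0<..1} \<Longrightarrow> (U has_real_derivative U' r) (at r within {0..1})"
    and contU': "continuous_on {0<..1} U'"
    and derU': "\<And>r. r \<in> {0<..<1} \<Longrightarrow> (U' has_real_derivative U'' r) (at r)"
    and contU'': "continuous_on {0<..<1} U''"
    and posU'': "\<And>r. r \<in> {0<..<1} \<Longrightarrow> 0 < U'' r"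
    and limU': "filterlim U' at_bot (at_right 0)"
    and mono: "mono_on {0<..<1} (\<lambda>r. r * U'' r)"
    and at_pos: "0 < a_tilde" and at_less: "a_tilde < a" and a_le: "a \<le> 1"
    and K3: "3 \<le> K"
    and kappa_pos: "0 < \<kappa>"
    and scaling: "\<And>z w. z \<in> prob_simplex K \<Longrightarrow> w \<in> prob_simplex K \<Longrightarrow>
                    DU U U' K a_tilde z w = ereal \<kappa> * DU U U' K a z w"
  shows "\<exists>\<mu>0 \<mu>1 lam. 0 < lam \<and>
           (\<forall>r \<in> {0<..a}. U r = lam * r * ln r + \<mu>1 * r + \<mu>0)"
proof -
  have derU_at: "(U has_real_derivative U' r) (at r)" if "0 < r" "r < 1" for r
  proof -
    have "at r within {0..1} = at r"
      by (rule at_within_open_subset[of r "{0<..<1}"]) (use that in auto)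
    then show ?thesis using derU[of r] that by simp
  qed
  have a_pos: "0 < a" and at_le: "a_tilde \<le> 1" using at_pos at_less a_le by auto
  obtain c where self_sim: "\<forall>t\<in>{0<..<a}. U' (a_tilde / a * t) = \<kappa> * a / a_tilde * U' t + c"
    using scaling_imp_derivative_self_similar[OF derU_at K3 at_pos at_le a_pos a_le scaling] by blast
  have "\<exists>lam>0. \<forall>r\<in>{0<..<a}. U'' r = lam / r"
  proof (rule second_derivative_inverse_if_self_similar
      [where \<rho> = "a_tilde / a" and q = "\<kappa> * a / a_tilde" and c = c])
    show "mono_on {0<..<a} (\<lambda>r. r * U'' r)"
      by (rule mono_on_subset[OF mono]) (use a_le in auto)
  qed (use self_sim at_pos at_less a_le kappa_pos limU' in \<open>auto intro!: derU' posU''\<close>)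
  then obtain lam where lam: "0 < lam" "\<forall>r\<in>{0<..<a}. U'' r = lam / r" by blast
  have "\<exists>\<mu>0 \<mu>1. \<forall>r\<in>{0<..a}. U r = lam * r * ln r + \<mu>1 * r + \<mu>0"
  proof (rule xlnx_affine_if_second_derivative_inverse[where U' = U'])
    show "continuous_on {0<..a} U"
      by (rule continuous_on_subset[OF contU]) (use a_le in auto)
    show "(U' has_real_derivative lam / r) (at r)" if "0 < r" "r < a" for r
      using derU'[of r] lam(2) that a_le by auto
  qed (use at_pos at_less a_le derU_at in auto)
  with lam(1) show ?thesis by blast
qed

end
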